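(* The monoid $\Pi_2=\langle a,b,c\mid (ab^ic)^2=1\ (i\geq 1)\rangle$ has context-free word problem.
   Context: For a monoid $M$ with finite generating set $A$, the word problem of $M$ with respect to $A$ is the language $\{u\#v^{\mathrm{rev}} \mid u,v\in A^\ast,\ u=_M v\}$, where $\#\notin A$ and $v^{\mathrm{rev}}$ is the reversal of $v$. $M$ has context-free word problem if this language is context-free (this is independent of the finite generating set). *)

theory Defs
  imports Main
begin

text \<open>A context-free grammar over terminals of type 't: a finite set of
productions (A, w) with nonterminals represented by natural numbers and
right-hand sides being words over nonterminals (Inl) and terminals (Inr),
together with a start symbol.\<close>

type_synonym 't prod = "nat \<times> (nat + 't) list"

definition derive1 :: "'t prod set \<Rightarrow> (nat + 't) list \<Rightarrow> (nat + 't) list \<Rightarrow> bool" where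
  "derive1 P u v \<longleftrightarrow> (\<exists>x y A w. u = x @ [Inl A] @ y \<and> (A, w) \<in> P \<and> v = x @ w @ y)"

definition cfg_lang :: "'t prod set \<Rightarrow> nat \<Rightarrow> 't list set" where
  "cfg_lang P S = {w. (derive1 P)\<^sup>*\<^sup>* [Inl S] (map Inr w)}"

definition context_free :: "'t list set \<Rightarrow> bool" where
  "context_free L \<longleftrightarrow> (\<exists>P S. finite P \<and> L = cfg_lang P S)"

inductive pres_eq :: "('a list \<times> 'a list) set \<Rightarrow> 'a list \<Rightarrow> 'a list \<Rightarrow> bool"
  for R where
  refl: "pres_eq R u u"
| rel:  "(l, r) \<in> R \<Longrightarrow> pres_eq R (x @ l @ y) (x @ r @ y)"
| sym:  "pres_eq R u v \<Longrightarrow> pres_eq R v u"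
| trans: "pres_eq R u v \<Longrightarrow> pres_eq R v w \<Longrightarrow> pres_eq R u w"

datatype 'a wp_sym = Gen 'a | Hash

definition word_problem :: "('a list \<times> 'a list) set \<Rightarrow> 'a wp_sym list set" where
  "word_problem R = {map Gen u @ [Hash] @ rev (map Gen v) | u v. pres_eq R u v}"

datatype gen = a | b | c

definition Pi2_rels :: "(gen list \<times> gen list) set" where
  "Pi2_rels = {((a # replicate i b @ [c]) @ (a # replicate i b @ [c]), []) | i. i \<ge> 1}"

end

theory Submission
  imports Defs
begin

text \<open>The words equal to \<open>1\<close> in \<open>\<Pi>\<^sub>2\<close> are generated by a context-free grammar: a relator
  \<open>a b\<^sup>i c a b\<^sup>i c\<close> is grown from its middle \<open>c a\<close> outwards, one pair of \<open>b\<close>'s at a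
  time, with trivial words inserted everywhere. Two words are equal iff deleting trivial
  factors reduces both to a common word \<open>z\<close>; for the nontrivial direction take for \<open>z\<close> the
  normal form computed by a stack that cancels a relator as soon as one appears on top, which
  is invariant under the defining relations because a relator pushed onto a relator-free stack
  cancels completely. Then \<open>u # rev v\<close> is generated by matching the letters of \<open>z\<close> from the
  outside in, with the grammar \<open>S \<rightarrow> D x S x D' | D # D'\<close>, where \<open>D\<close> generates the trivial
  words and \<open>D'\<close> their reversals.\<close>

section \<open>Presentations and context-free grammars\<close>

lemma pres_eq_context: "pres_eq R u v \<Longrightarrow> pres_eq R (x @ u @ y) (x @ v @ y)"
proof (induction rule: pres_eq.induct)
  case (rel l r x' y')
  then show ?case by (metis append.assoc pres_eq.rel)
qed (auto intro: pres_eq.intros)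

lemma pres_eq_append: "pres_eq R u u' \<Longrightarrow> pres_eq R v v' \<Longrightarrow> pres_eq R (u @ v) (u' @ v')"
  by (metis append.right_neutral append_Nil pres_eq_context pres_eq.trans)

lemma pres_eq_Cons: "pres_eq R u v \<Longrightarrow> pres_eq R (x # u) (x # v)"
  using pres_eq_context[of R u v "[x]" "[]"] by simp

text \<open>\<open>yields P \<alpha> w\<close>: the sentential form \<open>\<alpha>\<close> derives the terminal word \<open>w\<close>, with the derivation
  organised as a tree rather than as a sequence of \<open>derive1\<close> steps.\<close>

inductive yields :: "'t prod set \<Rightarrow> (nat + 't) list \<Rightarrow> 't list \<Rightarrow> bool" for P where
  yields_Nil: "yields P [] []"
| yields_Inr: "yields P \<alpha> w \<Longrightarrow> yields P (Inr t # \<alpha>) (t # w)"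
| yields_Inl: "(A, \<beta>) \<in> P \<Longrightarrow> yields P \<beta> u \<Longrightarrow> yields P \<alpha> w \<Longrightarrow> yields P (Inl A # \<alpha>) (u @ w)"

lemma yields_production: "(A, \<beta>) \<in> P \<Longrightarrow> yields P \<beta> u \<Longrightarrow> yields P [Inl A] u"
  using yields_Inl[OF _ _ yields_Nil] by fastforce

lemma yields_Inl_append:
  assumes "yields P [Inl A] u" "yields P \<alpha> w"
  shows "yields P (Inl A # \<alpha>) (u @ w)"
proof -
  from assms(1) obtain \<beta> where "(A, \<beta>) \<in> P" "yields P \<beta> u"
    by (auto elim!: yields.cases[of P "[Inl A]"] elim: yields.cases[of P "[]"])
  then show ?thesis using assms(2) by (rule yields_Inl)
qed

lemma yields_append: "yields P \<alpha> u \<Longrightarrow> yields P \<beta> v \<Longrightarrow> yields P (\<alpha> @ \<beta>) (u @ v)"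
proof (induction rule: yields.induct)
  case (yields_Inl A \<beta>' u \<alpha> w)
  then show ?case using yields.yields_Inl[OF yields_Inl(1,2) yields_Inl(5)] by simp
qed (auto intro: yields.intros)

lemma yields_appendE:
  assumes "yields P (\<alpha> @ \<beta>) w"
  obtains u v where "w = u @ v" "yields P \<alpha> u" "yields P \<beta> v"
  using assms
proof (induction \<alpha> arbitrary: w thesis)
  case Nil
  then show ?case using yields_Nil by fastforce
next
  case (Cons x \<alpha>)
  show ?case
  proof (cases x)
    case (Inl A)
    from Cons.prems(2) obtain \<beta>' u w' where "(A, \<beta>') \<in> P" "yields P \<beta>' u"
      "yields P (\<alpha> @ \<beta>) w'" "w = u @ w'"
      unfolding Inl by (auto elim: yields.cases)
    with Cons.IH Cons.prems(1) show ?thesis unfolding Inl by (metis append.assoc yields_Inl)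
  next
    case (Inr t)
    from Cons.prems(2) obtain w' where "yields P (\<alpha> @ \<beta>) w'" "w = t # w'"
      unfolding Inr by (auto elim: yields.cases)
    with Cons.IH Cons.prems(1) show ?thesis unfolding Inr by (metis append_Cons yields_Inr)
  qed
qed

lemma yields_map_Inr: "yields P (map Inr w) w"
  by (induction w) (auto intro: yields.intros)

lemma derive1_yields: "derive1 P \<alpha> \<beta> \<Longrightarrow> yields P \<beta> w \<Longrightarrow> yields P \<alpha> w"
proof -
  assume "derive1 P \<alpha> \<beta>" "yields P \<beta> w"
  then obtain x y A \<gamma> where d: "\<alpha> = x @ [Inl A] @ y" "(A, \<gamma>) \<in> P" "yields P (x @ \<gamma> @ y) w"
    unfolding derive1_def by blast
  obtain w1 w2 w3 where "w = w1 @ w2 @ w3" "yields P x w1" "yields P \<gamma> w2" "yields P y w3"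
    using d(3) by (metis yields_appendE)
  then show ?thesis
    using d(1,2) by (metis yields_append yields_Inl append_Cons append_Nil)
qed

lemma derive1_context: "derive1 P u v \<Longrightarrow> derive1 P (x @ u @ y) (x @ v @ y)"
  unfolding derive1_def by (metis append.assoc)

lemma derives_context: "(derive1 P)\<^sup>*\<^sup>* u v \<Longrightarrow> (derive1 P)\<^sup>*\<^sup>* (x @ u @ y) (x @ v @ y)"
  by (induction rule: rtranclp_induct) (auto intro: rtranclp.rtrancl_into_rtrancl derive1_context)

lemma yields_derives: "yields P \<alpha> w \<Longrightarrow> (derive1 P)\<^sup>*\<^sup>* \<alpha> (map Inr w)"
proof (induction rule: yields.induct)
  case yields_Nil
  then show ?case by simp
next
  case (yields_Inr \<alpha> w t)
  then show ?case using derives_context[OF yields_Inr.IH, of "[Inr t]" "[]"] by simp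
next
  case (yields_Inl A \<beta> u \<alpha> w)
  have "derive1 P (Inl A # \<alpha>) (\<beta> @ \<alpha>)"
    unfolding derive1_def using yields_Inl.hyps(1) by (metis append_Cons append_Nil)
  moreover have "(derive1 P)\<^sup>*\<^sup>* (\<beta> @ \<alpha>) (map Inr u @ \<alpha>)"
    using derives_context[OF yields_Inl.IH(1), of "[]" \<alpha>] by simp
  moreover have "(derive1 P)\<^sup>*\<^sup>* (map Inr u @ \<alpha>) (map Inr u @ map Inr w)"
    using derives_context[OF yields_Inl.IH(2), of "map Inr u" "[]"] by simp
  ultimately show ?case by (simp add: converse_rtranclp_into_rtranclp rtranclp_trans)
qed

lemma cfg_lang_eq_yields: "cfg_lang P S = {w. yields P [Inl S] w}"
proof -
  have "(derive1 P)\<^sup>*\<^sup>* \<alpha> \<beta> \<Longrightarrow> yields P \<beta> w \<Longrightarrow> yields P \<alpha> w" for \<alpha> \<beta> w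
    by (induction rule: converse_rtranclp_induct) (auto intro: derive1_yields)
  then show ?thesis unfolding cfg_lang_def using yields_derives yields_map_Inr by blast
qed

fun sem_form :: "(nat \<Rightarrow> 't list set) \<Rightarrow> (nat + 't) list \<Rightarrow> 't list \<Rightarrow> bool" where
  "sem_form I [] w \<longleftrightarrow> w = []"
| "sem_form I (Inr t # \<alpha>) w \<longleftrightarrow> (\<exists>w'. w = t # w' \<and> sem_form I \<alpha> w')"
| "sem_form I (Inl A # \<alpha>) w \<longleftrightarrow> (\<exists>u v. w = u @ v \<and> u \<in> I A \<and> sem_form I \<alpha> v)"

lemma yields_sound:
  assumes "\<And>A \<beta> u. (A, \<beta>) \<in> P \<Longrightarrow> sem_form I \<beta> u \<Longrightarrow> u \<in> I A"
  shows "yields P \<alpha> w \<Longrightarrow> sem_form I \<alpha> w"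
  by (induction rule: yields.induct) (auto intro: assms)

lemma cfg_lang_subset:
  assumes "\<And>A \<beta> u. (A, \<beta>) \<in> P \<Longrightarrow> sem_form I \<beta> u \<Longrightarrow> u \<in> I A"
  shows "cfg_lang P S \<subseteq> I S"
  using yields_sound[OF assms] by (fastforce simp: cfg_lang_eq_yields)

section \<open>Words equal to 1 in \<open>\<Pi>\<^sub>2\<close>\<close>

abbreviation eq_Pi2 :: "gen list \<Rightarrow> gen list \<Rightarrow> bool" where
  "eq_Pi2 \<equiv> pres_eq Pi2_rels"

definition abc :: "nat \<Rightarrow> gen list" where
  "abc i = a # replicate i b @ [c]"

definition relator :: "nat \<Rightarrow> gen list" where
  "relator i = abc i @ abc i"

lemma Pi2_rels_eq: "Pi2_rels = {(relator i, []) | i. 1 \<le> i}"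
  unfolding Pi2_rels_def relator_def abc_def by auto

lemma eq_Pi2_relator: "1 \<le> i \<Longrightarrow> eq_Pi2 (relator i) []"
  using pres_eq.rel[of "relator i" "[]" Pi2_rels "[]" "[]"] by (auto simp: Pi2_rels_eq)

lemma relator_eq_middle: "relator i = a # (replicate i b @ c # a # replicate i b) @ [c]"
  by (simp add: relator_def abc_def)

lemma relator_eq_snoc: "relator i = abc i @ a # replicate i b @ [c]"
  by (simp add: relator_def abc_def)

text \<open>\<open>Triv\<close> is a context-free description of the words equal to \<open>1\<close>; a word of \<open>Mid\<close>
  equals \<open>b\<^sup>i c a b\<^sup>i\<close> for some \<open>i \<ge> 1\<close>, the middle of the relator \<open>a b\<^sup>i c a b\<^sup>i c\<close>.\<close>

inductive_set Triv :: "gen list set" and Mid :: "gen list set" where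
  Triv_Nil: "[] \<in> Triv"
| Triv_append: "x \<in> Triv \<Longrightarrow> y \<in> Triv \<Longrightarrow> x @ y \<in> Triv"
| Triv_relator: "d \<in> Triv \<Longrightarrow> z \<in> Mid \<Longrightarrow> a # d @ z @ [c] \<in> Triv"
| Mid_base: "d1 \<in> Triv \<Longrightarrow> d2 \<in> Triv \<Longrightarrow> d3 \<in> Triv \<Longrightarrow> d4 \<in> Triv \<Longrightarrow>
    b # d1 @ c # d2 @ a # d3 @ b # d4 \<in> Mid"
| Mid_step: "d1 \<in> Triv \<Longrightarrow> z \<in> Mid \<Longrightarrow> d2 \<in> Triv \<Longrightarrow> b # d1 @ z @ b # d2 \<in> Mid"

lemma Triv_Mid_sound:
  shows "d \<in> Triv \<Longrightarrow> eq_Pi2 d []"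
    and "z \<in> Mid \<Longrightarrow> \<exists>i\<ge>1. eq_Pi2 z (replicate i b @ c # a # replicate i b)"
proof (induction rule: Triv_Mid.inducts)
  case Triv_Nil
  then show ?case by (rule pres_eq.refl)
next
  case (Triv_append x y)
  then show ?case using pres_eq_append by fastforce
next
  case (Triv_relator d z)
  then obtain i where i: "i \<ge> 1" "eq_Pi2 z (replicate i b @ c # a # replicate i b)" by blast
  have "eq_Pi2 (a # d @ z @ [c]) (a # [] @ (replicate i b @ c # a # replicate i b) @ [c])"
    by (intro pres_eq_Cons pres_eq_append Triv_relator i pres_eq.refl)
  then show ?case
    using eq_Pi2_relator[OF i(1)] pres_eq.trans by (fastforce simp: relator_eq_middle)
next
  case (Mid_base d1 d2 d3 d4)
  have "eq_Pi2 (b # d1 @ c # d2 @ a # d3 @ b # d4) (b # [] @ c # [] @ a # [] @ b # [])"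
    by (intro pres_eq_Cons pres_eq_append Mid_base pres_eq.refl)
  then show ?case by (intro exI[of _ 1]) simp
next
  case (Mid_step d1 z d2)
  then obtain i where i: "i \<ge> 1" "eq_Pi2 z (replicate i b @ c # a # replicate i b)" by blast
  have "eq_Pi2 (b # d1 @ z @ b # d2) (b # [] @ (replicate i b @ c # a # replicate i b) @ b # [])"
    by (intro pres_eq_Cons pres_eq_append Mid_step i pres_eq.refl)
  moreover have "b # [] @ (replicate i b @ c # a # replicate i b) @ b # [] =
     replicate (Suc i) b @ c # a # replicate (Suc i) b"
    by (simp add: replicate_append_same[symmetric] del: replicate_append_same)
  ultimately show ?case by (intro exI[of _ "Suc i"]) auto
qed

inductive reduces :: "gen list \<Rightarrow> gen list \<Rightarrow> bool" where
  reduces_Nil: "d \<in> Triv \<Longrightarrow> reduces d []"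
| reduces_Cons: "d \<in> Triv \<Longrightarrow> reduces w z \<Longrightarrow> reduces (d @ x # w) (x # z)"

lemma reduces_sound: "reduces u z \<Longrightarrow> eq_Pi2 u z"
proof (induction rule: reduces.induct)
  case (reduces_Nil d)
  then show ?case using Triv_Mid_sound(1) by blast
next
  case (reduces_Cons d w z x)
  have "eq_Pi2 (d @ x # w) ([] @ x # z)"
    by (intro pres_eq_append pres_eq_Cons reduces_Cons Triv_Mid_sound(1))
  then show ?case by simp
qed

lemma reduces_Nil_iff: "reduces u [] \<longleftrightarrow> u \<in> Triv"
  by (auto elim: reduces.cases intro: reduces_Nil)

lemma reduces_singleton_iff:
  "reduces u [x] \<longleftrightarrow> (\<exists>d1 d2. u = d1 @ x # d2 \<and> d1 \<in> Triv \<and> d2 \<in> Triv)"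
  by (auto elim!: reduces.cases intro: reduces.intros)

lemma reduces_Triv_prefix: "d \<in> Triv \<Longrightarrow> reduces w z \<Longrightarrow> reduces (d @ w) z"
  by (erule reduces.cases)
    (auto intro: reduces.intros Triv_append simp del: append_assoc simp: append_assoc[symmetric])

lemma reduces_append: "reduces u1 z1 \<Longrightarrow> reduces u2 z2 \<Longrightarrow> reduces (u1 @ u2) (z1 @ z2)"
  by (induction rule: reduces.induct) (auto intro: reduces.intros reduces_Triv_prefix)

lemma reduces_snoc:
  assumes "reduces u z" shows "reduces (u @ [x]) (z @ [x])"
proof -
  have "reduces ([] @ x # []) [x]" by (intro reduces.intros Triv_Nil)
  then show ?thesis using reduces_append[OF assms] by simp
qed

lemma reduces_appendE:
  assumes "reduces u (z1 @ z2)"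
  obtains u1 u2 where "u = u1 @ u2" "reduces u1 z1" "reduces u2 z2"
  using assms
proof (induction z1 arbitrary: u thesis)
  case Nil
  then show ?case using Triv_Nil reduces_Nil by fastforce
next
  case (Cons x z1)
  from Cons.prems(2) obtain d w where "u = d @ x # w" "d \<in> Triv" "reduces w (z1 @ z2)"
    by (auto elim: reduces.cases)
  with Cons.IH show ?case by (metis Cons.prems(1) append.assoc append_Cons reduces_Cons)
qed

lemma reduces_Cons_iff:
  "reduces u (x # z) \<longleftrightarrow> (\<exists>d w. u = d @ x # w \<and> d \<in> Triv \<and> reduces w z)"
  by (blast elim: reduces.cases intro: reduces_Cons)

lemma Mid_append_Triv: "z \<in> Mid \<Longrightarrow> e \<in> Triv \<Longrightarrow> z @ e \<in> Mid"
  by (erule Mid.cases) (auto intro: Mid_base Mid_step Triv_append)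

lemma reduces_middle_Mid:
  assumes "1 \<le> i" "reduces u (replicate i b @ c # a # replicate i b)"
  shows "\<exists>d z. u = d @ z \<and> d \<in> Triv \<and> z \<in> Mid"
  using assms
proof (induction i arbitrary: u rule: nat_induct_at_least)
  case base
  then obtain d0 d1 d2 d3 d4 where "u = d0 @ b # d1 @ c # d2 @ a # d3 @ b # d4"
    "d0 \<in> Triv" "d1 \<in> Triv" "d2 \<in> Triv" "d3 \<in> Triv" "d4 \<in> Triv"
    by (auto simp: reduces_Cons_iff reduces_Nil_iff)
  then show ?case by (blast intro: Mid_base)
next
  case (Suc j)
  have "replicate (Suc j) b @ c # a # replicate (Suc j) b
      = b # (replicate j b @ c # a # replicate j b) @ [b]"
    by (simp add: replicate_append_same[symmetric] del: replicate_append_same)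
  with Suc.prems obtain d0 w where u: "u = d0 @ b # w" "d0 \<in> Triv"
    and w: "reduces w ((replicate j b @ c # a # replicate j b) @ [b])"
    by (auto simp: reduces_Cons_iff)
  from w obtain w1 w2 where "w = w1 @ w2" "reduces w1 (replicate j b @ c # a # replicate j b)"
    "reduces w2 [b]"
    by (rule reduces_appendE)
  moreover obtain d z where "w1 = d @ z" "d \<in> Triv" "z \<in> Mid"
    using Suc.IH calculation(2) by blast
  moreover obtain e1 e2 where "w2 = e1 @ b # e2" "e1 \<in> Triv" "e2 \<in> Triv"
    using calculation(3) by (auto simp: reduces_singleton_iff)
  ultimately have "u = d0 @ b # d @ (z @ e1) @ b # e2" "z @ e1 \<in> Mid"
    using u by (auto intro: Mid_append_Triv)
  then show ?case using u(2) \<open>d \<in> Triv\<close> \<open>e2 \<in> Triv\<close> by (blast intro: Mid_step)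
qed

lemma reduces_relator_Triv:
  assumes "1 \<le> i" "reduces u (relator i)"
  shows "u \<in> Triv"
proof -
  from assms(2) obtain d0 w where u: "u = d0 @ a # w" "d0 \<in> Triv"
    and w: "reduces w ((replicate i b @ c # a # replicate i b) @ [c])"
    by (auto simp: relator_eq_middle reduces_Cons_iff)
  from w obtain w1 w2 where "w = w1 @ w2" "reduces w1 (replicate i b @ c # a # replicate i b)"
    "reduces w2 [c]"
    by (rule reduces_appendE)
  moreover obtain d z where "w1 = d @ z" "d \<in> Triv" "z \<in> Mid"
    using reduces_middle_Mid assms(1) calculation(2) by blast
  moreover obtain e1 e2 where "w2 = e1 @ c # e2" "e1 \<in> Triv" "e2 \<in> Triv"
    using calculation(3) by (auto simp: reduces_singleton_iff)
  ultimately have "u = d0 @ (a # d @ (z @ e1) @ [c]) @ e2" "a # d @ (z @ e1) @ [c] \<in> Triv"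
    using u Triv_relator[of d "z @ e1"] by (simp_all add: Mid_append_Triv)
  then show ?thesis using u(2) \<open>e2 \<in> Triv\<close> by (metis Triv_append append.assoc)
qed

lemma reduces_drop_relator: "1 \<le> i \<Longrightarrow> reduces u (z @ relator i) \<Longrightarrow> reduces u z"
  by (metis append.right_neutral reduces_append reduces_Nil reduces_appendE reduces_relator_Triv)

lemma replicate_b_a_inject:
  "replicate i b @ a # x = replicate j b @ a # y \<Longrightarrow> i = j \<and> x = y"
proof (induction i arbitrary: j)
  case 0
  then show ?case by (cases j) auto
next
  case (Suc i)
  then show ?case by (cases j) auto
qed

lemma abc_suffix_inject: "s @ abc i = t @ abc j \<Longrightarrow> s = t \<and> i = j"
proof -
  assume "s @ abc i = t @ abc j"
  then have "rev (s @ abc i) = rev (t @ abc j)" by simp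
  then have "replicate i b @ a # rev s = replicate j b @ a # rev t" by (simp add: abc_def)
  then show ?thesis by (auto dest: replicate_b_a_inject)
qed

lemma relator_suffix_inject: "s @ relator i = t @ relator j \<Longrightarrow> s = t \<and> i = j"
  unfolding relator_def by (metis abc_suffix_inject append.assoc)

definition ends_with_relator :: "gen list \<Rightarrow> bool" where
  "ends_with_relator s \<longleftrightarrow> (\<exists>i t. 1 \<le> i \<and> s = t @ relator i)"

definition push :: "gen list \<Rightarrow> gen \<Rightarrow> gen list" where
  "push s x = (if ends_with_relator (s @ [x])
     then THE t. \<exists>i. 1 \<le> i \<and> s @ [x] = t @ relator i else s @ [x])"

lemma push_cancel: "1 \<le> i \<Longrightarrow> s @ [x] = t @ relator i \<Longrightarrow> push s x = t"
  unfolding push_def ends_with_relator_def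
  by (auto intro!: the_equality dest: relator_suffix_inject)

lemma push_no_cancel: "\<not> ends_with_relator (s @ [x]) \<Longrightarrow> push s x = s @ [x]"
  unfolding push_def by simp

lemma push_not_c: "x \<noteq> c \<Longrightarrow> push s x = s @ [x]"
  by (rule push_no_cancel) (auto simp: ends_with_relator_def relator_eq_snoc)

definition relator_free :: "gen list \<Rightarrow> bool" where
  "relator_free s \<longleftrightarrow> \<not> (\<exists>p q i. 1 \<le> i \<and> s = p @ relator i @ q)"

lemma relator_free_Nil: "relator_free []"
  by (auto simp: relator_free_def relator_def abc_def)

lemma relator_free_push:
  assumes "relator_free s" shows "relator_free (push s x)"
proof (cases "ends_with_relator (s @ [x])")
  case True
  then obtain i t where it: "1 \<le> i" "s @ [x] = t @ relator i"
    unfolding ends_with_relator_def by blast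
  then have "s = t @ abc i @ a # replicate i b" by (simp add: relator_eq_snoc)
  then have "relator_free t" using assms unfolding relator_free_def by (metis append.assoc)
  then show ?thesis using push_cancel[OF it] by simp
next
  case False
  have "\<not> (1 \<le> i \<and> s @ [x] = p @ relator i @ q)" for p q i
  proof (cases q rule: rev_cases)
    case Nil
    then show ?thesis using False by (auto simp: ends_with_relator_def)
  next
    case (snoc q' y)
    then show ?thesis using assms unfolding relator_free_def by auto
  qed
  then show ?thesis using push_no_cancel[OF False] by (auto simp: relator_free_def)
qed

lemma relator_free_foldl_push: "relator_free s \<Longrightarrow> relator_free (foldl push s xs)"
  by (induction xs arbitrary: s) (auto intro: relator_free_push)

lemma foldl_push_replicate_b: "foldl push s (replicate k b) = s @ replicate k b"
  by (induction k arbitrary: s)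
    (auto simp: push_not_c replicate_append_same[symmetric] simp del: replicate_append_same)

text \<open>The only subtle case: the first half \<open>a b\<^sup>i c\<close> of the relator may itself complete a
  relator together with the stack, which then leaves exactly \<open>a b\<^sup>i c\<close> for the second half.\<close>

lemma foldl_push_relator:
  assumes "relator_free s" "1 \<le> i"
  shows "foldl push s (relator i) = s"
proof -
  let ?s1 = "push (s @ a # replicate i b) c"
  have "foldl push s (relator i) = push (?s1 @ a # replicate i b) c"
    by (simp add: relator_def abc_def foldl_push_replicate_b push_not_c)
  also have "\<dots> = s"
  proof (cases "ends_with_relator (s @ abc i)")
    case True
    then obtain j t where jt: "1 \<le> j" "s @ abc i = t @ relator j"
      unfolding ends_with_relator_def by blast
    then have "s @ abc i = (t @ abc j) @ abc j" by (simp add: relator_def)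
    then have s: "s = t @ abc i" by (metis abc_suffix_inject)
    have s1: "?s1 = t" using push_cancel jt by (simp add: abc_def)
    have "\<not> ends_with_relator (t @ abc i)"
      using assms(1) s unfolding relator_free_def ends_with_relator_def by force
    then have "push (t @ a # replicate i b) c = t @ abc i"
      using push_no_cancel by (simp add: abc_def)
    then show ?thesis using s1 s by simp
  next
    case False
    then have "?s1 = s @ abc i" using push_no_cancel by (simp add: abc_def)
    then show ?thesis using push_cancel[OF assms(2)] by (simp add: relator_def abc_def)
  qed
  finally show ?thesis .
qed

definition nf :: "gen list \<Rightarrow> gen list" where
  "nf u = foldl push [] u"

lemma nf_relator: "1 \<le> i \<Longrightarrow> nf (x @ relator i @ y) = nf (x @ y)"
  unfolding nf_def by (simp add: foldl_push_relator relator_free_foldl_push relator_free_Nil)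

lemma eq_Pi2_nf: "eq_Pi2 u v \<Longrightarrow> nf u = nf v"
  by (induction rule: pres_eq.induct) (auto simp: Pi2_rels_eq nf_relator)

lemma reduces_nf: "reduces u (nf u)"
proof (induction u rule: rev_induct)
  case Nil
  then show ?case by (simp add: nf_def reduces_Nil Triv_Nil)
next
  case (snoc x u)
  have nf: "nf (u @ [x]) = push (nf u) x" by (simp add: nf_def)
  have red: "reduces (u @ [x]) (nf u @ [x])" using reduces_snoc[OF snoc] .
  show ?case
  proof (cases "ends_with_relator (nf u @ [x])")
    case True
    then obtain i t where "1 \<le> i" "nf u @ [x] = t @ relator i"
      unfolding ends_with_relator_def by blast
    then show ?thesis using nf red push_cancel reduces_drop_relator by metis
  next
    case False
    then show ?thesis using nf red push_no_cancel by simp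
  qed
qed

lemma eq_Pi2_iff_common_reduct: "eq_Pi2 u v \<longleftrightarrow> (\<exists>z. reduces u z \<and> reduces v z)"
proof
  assume "eq_Pi2 u v"
  then show "\<exists>z. reduces u z \<and> reduces v z" using reduces_nf eq_Pi2_nf by metis
next
  assume "\<exists>z. reduces u z \<and> reduces v z"
  then show "eq_Pi2 u v" using reduces_sound pres_eq.sym pres_eq.trans by metis
qed

section \<open>A grammar for the word problem\<close>

abbreviation G :: "gen \<Rightarrow> nat + gen wp_sym" where "G x \<equiv> Inr (Gen x)"
abbreviation N :: "nat \<Rightarrow> nat + gen wp_sym" where "N A \<equiv> Inl A"

definition Pi2_grammar :: "gen wp_sym prod set" where
  "Pi2_grammar =
    {(0, [N 1, G a, N 0, G a, N 3]), (0, [N 1, G b, N 0, G b, N 3]),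
     (0, [N 1, G c, N 0, G c, N 3]), (0, [N 1, Inr Hash, N 3]),
     (1, []), (1, [N 1, N 1]), (1, [G a, N 1, N 2, G c]),
     (2, [G b, N 1, G c, N 1, G a, N 1, G b, N 1]), (2, [G b, N 1, N 2, G b, N 1]),
     (3, []), (3, [N 3, N 3]), (3, [G c, N 4, N 3, G a]),
     (4, [N 3, G b, N 3, G a, N 3, G c, N 3, G b]), (4, [N 3, G b, N 4, N 3, G b])}"

definition Pi2_interp :: "nat \<Rightarrow> gen wp_sym list set" where
  "Pi2_interp A =
    (if A = 0 then word_problem Pi2_rels
     else if A = 1 then map Gen ` Triv else if A = 2 then map Gen ` Mid
     else if A = 3 then rev ` map Gen ` Triv else rev ` map Gen ` Mid)"

fun gen_of :: "gen wp_sym \<Rightarrow> gen" where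
  "gen_of (Gen x) = x"
| "gen_of Hash = a" \<comment> \<open>junk value, only used on words without \<open>Hash\<close>\<close>

lemma mem_image_map_Gen: "w \<in> map Gen ` X \<longleftrightarrow> Hash \<notin> set w \<and> map gen_of w \<in> X"
proof
  assume "Hash \<notin> set w \<and> map gen_of w \<in> X"
  moreover have "Hash \<notin> set w \<Longrightarrow> map Gen (map gen_of w) = w"
    by (induction w) (auto elim: gen_of.elims, metis gen_of.simps(1) wp_sym.exhaust)
  ultimately show "w \<in> map Gen ` X" by (metis image_eqI)
qed (auto simp: comp_def)

lemma mem_image_rev: "w \<in> rev ` X \<longleftrightarrow> rev w \<in> X"
  by (metis image_iff rev_rev_ident)

lemma word_problem_Pi2_base:
  assumes "y \<in> Triv" "y' \<in> Triv"
  shows "map Gen y @ Hash # rev (map Gen y') \<in> word_problem Pi2_rels"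
proof -
  have "eq_Pi2 y y'"
    using assms Triv_Mid_sound(1) pres_eq.sym pres_eq.trans by blast
  then show ?thesis unfolding word_problem_def by auto
qed

lemma word_problem_Pi2_step:
  assumes "y \<in> Triv" "y' \<in> Triv" "w \<in> word_problem Pi2_rels"
  shows "map Gen y @ Gen x # w @ Gen x # rev (map Gen y') \<in> word_problem Pi2_rels"
proof -
  obtain u v where w: "w = map Gen u @ [Hash] @ rev (map Gen v)" "eq_Pi2 u v"
    using assms(3) unfolding word_problem_def by blast
  have "eq_Pi2 (y @ x # u) ([] @ x # v)" "eq_Pi2 (y' @ x # v) ([] @ x # v)"
    using pres_eq_append[OF Triv_Mid_sound(1)[OF assms(1)] pres_eq_Cons[OF w(2)]]
      pres_eq_append[OF Triv_Mid_sound(1)[OF assms(2)] pres_eq.refl] by simp_all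
  then have "eq_Pi2 (y @ x # u) (y' @ x # v)"
    by (auto intro: pres_eq.sym pres_eq.trans)
  then show ?thesis
    unfolding word_problem_def w(1)
    by (intro CollectI exI[of _ "y @ x # u"] exI[of _ "y' @ x # v"]) simp
qed

lemma Pi2_grammar_sound:
  "(A, \<beta>) \<in> Pi2_grammar \<Longrightarrow> sem_form Pi2_interp \<beta> u \<Longrightarrow> u \<in> Pi2_interp A"
  unfolding Pi2_grammar_def Pi2_interp_def
  by (auto intro: word_problem_Pi2_step word_problem_Pi2_base)
    (auto simp: mem_image_map_Gen mem_image_rev comp_def intro: Triv_Mid.intros)

lemma Triv_Mid_yields:
  shows "d \<in> Triv \<Longrightarrow>
      yields Pi2_grammar [N 1] (map Gen d) \<and> yields Pi2_grammar [N 3] (rev (map Gen d))"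
    and "z \<in> Mid \<Longrightarrow>
      yields Pi2_grammar [N 2] (map Gen z) \<and> yields Pi2_grammar [N 4] (rev (map Gen z))"
proof (induction rule: Triv_Mid.inducts)
  case Triv_Nil
  have "(1, []) \<in> Pi2_grammar" "(3, []) \<in> Pi2_grammar"
    by (simp_all add: Pi2_grammar_def)
  then show ?case by (auto intro: yields_production yields_Nil)
next
  case (Triv_append x y)
  have "(1, [N 1, N 1]) \<in> Pi2_grammar" "(3, [N 3, N 3]) \<in> Pi2_grammar"
    by (simp_all add: Pi2_grammar_def)
  with Triv_append show ?case by (auto intro: yields_production yields_Inl_append)
next
  case (Triv_relator d z)
  have "(1, [G a, N 1, N 2, G c]) \<in> Pi2_grammar" "(3, [G c, N 4, N 3, G a]) \<in> Pi2_grammar"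
    by (simp_all add: Pi2_grammar_def)
  with Triv_relator show ?case
    by (fastforce intro: yields_production yields_Inl_append yields_Inr yields_Nil)
next
  case (Mid_base d1 d2 d3 d4)
  have "(2, [G b, N 1, G c, N 1, G a, N 1, G b, N 1]) \<in> Pi2_grammar"
    "(4, [N 3, G b, N 3, G a, N 3, G c, N 3, G b]) \<in> Pi2_grammar"
    by (simp_all add: Pi2_grammar_def)
  with Mid_base show ?case
    by (fastforce intro: yields_production yields_Inl_append yields_Inr yields_Nil)
next
  case (Mid_step d1 z d2)
  have "(2, [G b, N 1, N 2, G b, N 1]) \<in> Pi2_grammar"
    "(4, [N 3, G b, N 4, N 3, G b]) \<in> Pi2_grammar"
    by (simp_all add: Pi2_grammar_def)
  with Mid_step show ?case
    by (fastforce intro: yields_production yields_Inl_append yields_Inr yields_Nil)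
qed

lemma common_reduct_yields:
  "reduces u z \<Longrightarrow> reduces v z \<Longrightarrow> yields Pi2_grammar [N 0] (map Gen u @ Hash # rev (map Gen v))"
proof (induction arbitrary: v rule: reduces.induct)
  case (reduces_Nil d)
  then have "v \<in> Triv" by (simp add: reduces_Nil_iff)
  moreover have "(0, [N 1, Inr Hash, N 3]) \<in> Pi2_grammar"
    by (simp add: Pi2_grammar_def)
  ultimately show ?case using Triv_Mid_yields(1) reduces_Nil(1)
    by (fastforce intro: yields_production yields_Inl_append yields_Inr yields_Nil)
next
  case (reduces_Cons d w z x)
  from reduces_Cons.prems obtain d' v' where v: "v = d' @ x # v'" "d' \<in> Triv" "reduces v' z"
    by (auto simp: reduces_Cons_iff)
  have "yields Pi2_grammar [N 0, G x, N 3]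
      ((map Gen w @ Hash # rev (map Gen v')) @ Gen x # rev (map Gen d'))"
    using Triv_Mid_yields(1)[OF v(2)]
    by (intro yields_Inl_append[OF reduces_Cons.IH[OF v(3)]])
      (fastforce intro: yields_Inl_append yields_Inr yields_Nil)
  moreover have "(0, [N 1, G x, N 0, G x, N 3]) \<in> Pi2_grammar"
    by (cases x) (auto simp: Pi2_grammar_def)
  ultimately show ?case using Triv_Mid_yields(1) reduces_Cons.hyps(1) v(1)
    by (fastforce intro: yields_production yields_Inl_append yields_Inr)
qed

lemma word_problem_Pi2_eq_cfg_lang: "word_problem Pi2_rels = cfg_lang Pi2_grammar 0"
proof
  show "word_problem Pi2_rels \<subseteq> cfg_lang Pi2_grammar 0"
  proof
    fix w assume "w \<in> word_problem Pi2_rels"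
    then obtain u v z where "w = map Gen u @ Hash # rev (map Gen v)" "reduces u z" "reduces v z"
      unfolding word_problem_def eq_Pi2_iff_common_reduct by auto
    then show "w \<in> cfg_lang Pi2_grammar 0"
      using common_reduct_yields by (simp add: cfg_lang_eq_yields)
  qed
  have "cfg_lang Pi2_grammar 0 \<subseteq> Pi2_interp 0"
    by (rule cfg_lang_subset) (rule Pi2_grammar_sound)
  then show "cfg_lang Pi2_grammar 0 \<subseteq> word_problem Pi2_rels"
    by (simp add: Pi2_interp_def)
qed

theorem mainTheorem3:
  shows "context_free (word_problem Pi2_rels)"
  unfolding context_free_def word_problem_Pi2_eq_cfg_lang
  by (intro exI[of _ Pi2_grammar] exI[of _ 0]) (simp add: Pi2_grammar_def)

end
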